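(* Let $s$ be a Sturmian word having a factorization $s=U_1U_2\cdots U_n\cdots$ where each $U_i$ ($i\ge1$) is a non-empty prefix of $s$, and let $c$ be the first letter of $s$. Then $U_1\neq c^p$ for every integer $p\ge 1$.
   Context: A Sturmian word is an infinite word $s\in\{a,b\}^{\omega}$ that is aperiodic (not ultimately periodic) and balanced: for all factors $u,v$ of $s$ with $|u|=|v|$ one has $||u|_x-|v|_x|\le 1$ for $x\in\{a,b\}$, where $|u|_x$ is the number of occurrences of $x$ in $u$. *)

theory Defs
  imports Main
begin

text \<open>Infinite words over the two-letter alphabet {a,b}, represented by type bool
  (a = True, b = False), as functions nat => bool.\<close>

type_synonym iword = "nat \<Rightarrow> bool"

definition factor :: "iword \<Rightarrow> nat \<Rightarrow> nat \<Rightarrow> bool list" where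
  "factor s i n = map s [i..<i+n]"

definition occ :: "bool list \<Rightarrow> bool \<Rightarrow> nat" where
  "occ u x = length (filter (\<lambda>y. y = x) u)"

definition ultimately_periodic :: "iword \<Rightarrow> bool" where
  "ultimately_periodic s \<longleftrightarrow> (\<exists>p N. p > 0 \<and> (\<forall>n\<ge>N. s (n + p) = s n))"

definition balanced :: "iword \<Rightarrow> bool" where
  "balanced s \<longleftrightarrow> (\<forall>i j n x. \<bar>int (occ (factor s i n) x) - int (occ (factor s j n) x)\<bar> \<le> 1)"

definition sturmian :: "iword \<Rightarrow> bool" where
  "sturmian s \<longleftrightarrow> \<not> ultimately_periodic s \<and> balanced s"

definition is_prefix_of :: "bool list \<Rightarrow> iword \<Rightarrow> bool" where
  "is_prefix_of u s \<longleftrightarrow> (\<forall>j<length u. u ! j = s j)"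

definition blockpos :: "(nat \<Rightarrow> bool list) \<Rightarrow> nat \<Rightarrow> nat" where
  "blockpos U i = (\<Sum>k<i. length (U k))"

text \<open>s = U 0 U 1 U 2 ... (all blocks non-empty, so the concatenation is infinite).\<close>
definition is_factorization :: "iword \<Rightarrow> (nat \<Rightarrow> bool list) \<Rightarrow> bool" where
  "is_factorization s U \<longleftrightarrow> (\<forall>i. U i \<noteq> []) \<and>
     (\<forall>i j. j < length (U i) \<longrightarrow> s (blockpos U i + j) = U i ! j)"

end

theory Submission
  imports Defs
begin

text \<open>Every letter of s lying in a block U i with i \<ge> 1 is repeated, since U i is a prefix of s,
  at its offset inside that block, which is a strictly earlier position. By strong induction
  every letter of s therefore equals a letter of U 0. If U 0 = c^p, the word s is the constant
  word c c c ..., which is periodic and so not Sturmian.\<close>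

lemma blockpos_Suc: "blockpos U (Suc i) = blockpos U i + length (U i)"
  by (simp add: blockpos_def)

lemma blockpos_mono: "i \<le> j \<Longrightarrow> blockpos U i \<le> blockpos U j"
  unfolding blockpos_def by (rule sum_mono2) auto

lemma blockpos_ge_index:
  assumes "\<forall>i. U i \<noteq> []"
  shows "i \<le> blockpos U i"
proof (induction i)
  case (Suc i)
  have "1 \<le> length (U i)" using assms by (simp add: Suc_le_eq)
  with Suc show ?case by (simp add: blockpos_Suc)
qed simp

lemma blockpos_covers:
  assumes "\<forall>i. U i \<noteq> []"
  obtains i where "blockpos U i \<le> n" "n < blockpos U (Suc i)"
proof -
  have ex: "\<exists>k. n < blockpos U k"
    using blockpos_ge_index[OF assms, of "Suc n"] by (intro exI[of _ "Suc n"]) simp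
  define k where "k = (LEAST k. n < blockpos U k)"
  have k: "n < blockpos U k" unfolding k_def by (rule LeastI_ex[OF ex])
  then obtain i where i: "k = Suc i" by (cases k) (auto simp: blockpos_def)
  have "\<not> n < blockpos U i"
    using not_less_Least[of i "\<lambda>k. n < blockpos U k"] i unfolding k_def by simp
  with k i show ?thesis using that by (simp add: not_less)
qed

lemma prefix_factorization_letter:
  assumes "is_factorization s U" and "is_prefix_of (U i) s"
    and "blockpos U i \<le> n" and "n < blockpos U (Suc i)"
  shows "s n = s (n - blockpos U i)"
proof -
  define j where "j = n - blockpos U i"
  have j: "j < length (U i)" "n = blockpos U i + j"
    using assms(3,4) unfolding j_def by (auto simp: blockpos_Suc)
  have "s n = U i ! j" using assms(1) j by (simp add: is_factorization_def)
  also have "\<dots> = s j" using assms(2) j(1) by (simp add: is_prefix_of_def)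
  finally show ?thesis unfolding j_def .
qed

lemma prefix_factorization_replicate_constant:
  assumes fac: "is_factorization s U" and prefixes: "\<forall>i. is_prefix_of (U i) s"
    and U0: "U 0 = replicate p c" and "p \<ge> 1"
  shows "s n = c"
proof (induction n rule: less_induct)
  case (less n)
  have ne: "\<forall>i. U i \<noteq> []" using fac by (simp add: is_factorization_def)
  obtain i where i: "blockpos U i \<le> n" "n < blockpos U (Suc i)"
    using blockpos_covers[OF ne] by blast
  have letter: "s n = s (n - blockpos U i)"
    using prefix_factorization_letter[OF fac prefixes[rule_format] i] .
  show ?case
  proof (cases i)
    case 0
    then have "n < p" using i U0 by (simp add: blockpos_def)
    moreover have "s n = U 0 ! n"
      using fac \<open>n < p\<close> U0 unfolding is_factorization_def
      by (metis add_0 blockpos_def length_replicate lessThan_0 sum.empty)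
    ultimately show ?thesis using U0 by simp
  next
    case (Suc i')
    have "p \<le> blockpos U i"
      using blockpos_mono[of 1 i U] Suc U0 by (simp add: blockpos_def)
    then show ?thesis using letter less.IH[of "n - blockpos U i"] \<open>p \<ge> 1\<close> i(1) by simp
  qed
qed

lemma constant_ultimately_periodic:
  assumes "\<And>n. s n = c"
  shows "ultimately_periodic s"
  unfolding ultimately_periodic_def using assms by (intro exI[of _ 1] exI[of _ 0]) simp

theorem mainTheorem4:
  fixes s :: iword and U :: "nat \<Rightarrow> bool list"
  assumes "sturmian s"
    and "is_factorization s U"
    and "\<forall>i. is_prefix_of (U i) s"
  shows "\<forall>p::nat. p \<ge> 1 \<longrightarrow> U 0 \<noteq> replicate p (s 0)"
proof (intro allI impI notI)
  fix p :: nat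
  assume "p \<ge> 1" and "U 0 = replicate p (s 0)"
  then have "ultimately_periodic s"
    using prefix_factorization_replicate_constant[OF assms(2,3)] constant_ultimately_periodic
    by blast
  then show False using assms(1) by (simp add: sturmian_def)
qed

end
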